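(* For every integer $n\ge2$, $$\sum_{i=1}^{n-1}(-1)^i\binom{n}{i}\xi(i-n)=\frac{(-1)^{n+1}}{n+1}+\frac{(-1)^n}{2^n}.$$
   Context: $\xi(s)=\sum_{n\ge1}(n-\tfrac12)^{-s}=(2^s-1)\zeta(s)$, extended to all $s$ by analytic continuation. *)

theory Defs
  imports "HOL-Complex_Analysis.Complex_Analysis"
begin

text \<open>xi(s) = sum_{n>=1} (n - 1/2)^(-s) for Re s > 1, extended by analytic
  continuation to the complex plane minus the pole s = 1.  Here the series is
  indexed from 0, i.e. the terms are (m + 1/2)^(-s) for m = 0,1,2,...\<close>

definition xi_series_ext :: "(complex \<Rightarrow> complex) \<Rightarrow> bool" where
  "xi_series_ext f \<longleftrightarrow> f holomorphic_on (- {1}) \<and>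
     (\<forall>s. 1 < Re s \<longrightarrow>
        (\<lambda>m. complex_of_real (real m + 1/2) powr (- s)) sums f s)"

definition xi :: "complex \<Rightarrow> complex" where
  "xi s = (THE z. \<exists>f. xi_series_ext f \<and> f s = z)"

end

theory Submission
  imports Defs
begin

(* xi(s) is the Hurwitz zeta function zeta(s, 1/2), and the identity is the case a = 1/2 of one
   for zeta(s, a) with a > 0.  Write zeta(s, a) = a^(-s) + R(s) / (s - 1), where
   R(s) = (s - 1) * sum_m (m + a + 1)^(-s) for Re s > 1.  Expanding (m + a)^(1-s) in the binomial
   series around m + a + 1, summing over m (the differences (m + a)^(1-s) - (m + a + 1)^(1-s)
   telescope to a^(1-s)) and exchanging the two sums gives the recurrence
     sum_j (-1)^j * binomial(1 - s, j) / (j + 1) * R(s + j) = a^(1-s).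
   Solving it for its j = 0 term continues R strip by strip to an entire function that satisfies
   the same recurrence.  At s = 1 - N only the terms with j <= N survive: N = 0 and N = 1 give
   R(1) = 1 and R(0) = a + 1/2, and N = n, together with zeta(-k, a) = a^k - R(-k) / (k + 1),
   evaluates the alternating sum. *)

lemma has_sum_suminf_norm:
  fixes f :: "nat \<Rightarrow> 'a::banach"
  assumes "summable (\<lambda>n. norm (f n))"
  shows "(f has_sum (\<Sum>n. f n)) UNIV"
  using norm_summable_imp_has_sum[OF assms summable_sums[OF summable_norm_cancel[OF assms]]] .

lemma sums_suminf_swap:
  fixes f :: "nat \<Rightarrow> nat \<Rightarrow> 'a::banach"
  assumes rows: "\<And>j. summable (\<lambda>m. norm (f j m))"
    and total: "summable (\<lambda>j. \<Sum>m. norm (f j m))"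
  shows "(\<lambda>j. \<Sum>m. f j m) sums (\<Sum>m. \<Sum>j. f j m)"
proof -
  have cols: "summable (\<lambda>j. norm (f j m))" for m
    by (rule summable_comparison_test'[OF total]) (use sum_le_suminf[OF rows, of "{m}"] in auto)
  have "(\<lambda>(j, m). norm (f j m)) summable_on UNIV \<times> UNIV"
  proof (rule summable_on_SigmaI[where g="\<lambda>j. \<Sum>m. norm (f j m)"])
    show "((\<lambda>y. case (j, y) of (j, m) \<Rightarrow> norm (f j m)) has_sum (\<Sum>m. norm (f j m))) UNIV" for j
      using rows[of j] by (auto intro: sums_nonneg_imp_has_sum)
    show "(\<lambda>j. \<Sum>m. norm (f j m)) summable_on UNIV"
      using total by (simp add: summable_on_UNIV_nonneg_real_iff suminf_nonneg rows)
  qed simp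
  then have "(\<lambda>(j, m). f j m) summable_on UNIV \<times> UNIV"
    using abs_summable_summable[of "\<lambda>(j, m). f j m"] by (simp only: prod.case_distrib)
  then obtain S where S: "((\<lambda>(j, m). f j m) has_sum S) (UNIV \<times> UNIV)"
    unfolding summable_on_def by blast
  have S': "((\<lambda>(m, j). f j m) has_sum S) (UNIV \<times> UNIV)"
    using S by (subst has_sum_swap) simp
  have "((\<lambda>y. case (j, y) of (j, m) \<Rightarrow> f j m) has_sum (\<Sum>m. f j m)) UNIV" for j
    using has_sum_suminf_norm[OF rows[of j]] by simp
  from has_sum_SigmaD[OF S this] have "(\<lambda>j. \<Sum>m. f j m) sums S"
    by (rule has_sum_imp_sums)
  moreover have "((\<lambda>y. case (m, y) of (m, j) \<Rightarrow> f j m) has_sum (\<Sum>j. f j m)) UNIV" for m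
    using has_sum_suminf_norm[OF cols[of m]] by simp
  from has_sum_SigmaD[OF S' this] have "(\<lambda>m. \<Sum>j. f j m) sums S"
    by (rule has_sum_imp_sums)
  ultimately show ?thesis
    by (simp add: sums_iff)
qed

lemma holomorphic_on_suminf:
  fixes t :: "nat \<Rightarrow> complex \<Rightarrow> complex"
  assumes "open S" and "\<And>i. t i holomorphic_on S"
    and "\<And>x. x \<in> S \<Longrightarrow> \<exists>d>0. cball x d \<subseteq> S \<and>
           (\<exists>M. summable M \<and> (\<forall>i. \<forall>y\<in>cball x d. norm (t i y) \<le> M i))"
  shows "(\<lambda>x. \<Sum>i. t i x) holomorphic_on S"
proof (rule holomorphic_uniform_sequence[OF \<open>open S\<close>])
  show "(\<lambda>x. \<Sum>i<n. t i x) holomorphic_on S" for n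
    using assms(2) by (intro holomorphic_on_sum) auto
  fix x assume "x \<in> S"
  then obtain d M where "d > 0" "cball x d \<subseteq> S" "summable M"
    and "\<forall>i. \<forall>y\<in>cball x d. norm (t i y) \<le> M i"
    using assms(3) by meson
  then show "\<exists>d>0. cball x d \<subseteq> S \<and>
      uniform_limit (cball x d) (\<lambda>n x. \<Sum>i<n. t i x) (\<lambda>x. \<Sum>i. t i x) sequentially"
    using Weierstrass_m_test[of "cball x d" t M] by blast
qed

lemma halfplane_cball_margin:
  assumes "c < Re x"
  obtains d where "0 < d" and "\<And>y. y \<in> cball x d \<Longrightarrow> c + d \<le> Re y"
proof
  show "0 < (Re x - c) / 2"
    using assms by simp
  show "c + (Re x - c) / 2 \<le> Re y" if "y \<in> cball x ((Re x - c) / 2)" for y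
    using that abs_Re_le_cmod[of "x - y"] by (auto simp: dist_norm field_simps abs_le_iff)
qed

lemma cball_norm_upper: "y \<in> cball x d \<Longrightarrow> norm y \<le> norm x + d"
  using norm_triangle_sub[of y x] by (auto simp: dist_norm norm_minus_commute)

lemma norm_gchoose_le: "norm ((z :: complex) gchoose k) \<le> pochhammer (norm z) k / fact k"
proof -
  have "norm (z gchoose k) = (\<Prod>i<k. norm (z - of_nat i)) / fact k"
    by (simp add: gbinomial_prod_rev norm_divide prod_norm atLeast0LessThan)
  also have "\<dots> \<le> (\<Prod>i<k. norm z + of_nat i) / fact k"
    by (intro divide_right_mono prod_mono) (auto intro: order_trans[OF norm_triangle_ineq4])
  finally show ?thesis
    by (simp add: pochhammer_prod atLeast0LessThan)
qed

lemma pochhammer_mono: "0 \<le> x \<Longrightarrow> x \<le> y \<Longrightarrow> pochhammer x k \<le> pochhammer (y :: real) k"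
  unfolding pochhammer_prod by (intro prod_mono) auto

lemma summable_pochhammer_power:
  fixes r x :: real
  assumes "0 \<le> x" "x < 1"
  shows "summable (\<lambda>k. pochhammer r k / fact k * x ^ k)"
proof -
  have "(\<lambda>k. ((-r) gchoose k) * (-x) ^ k) sums (1 + (-x)) powr (-r)"
    using assms by (intro gen_binomial_real) auto
  moreover have "((-r) gchoose k) * (-x) ^ k = pochhammer r k / fact k * x ^ k" for k
    by (simp add: gbinomial_pochhammer power_minus' power_mult_distrib)
  ultimately show ?thesis
    by (simp add: sums_iff)
qed

lemma summable_pochhammer_power_shift:
  fixes r x :: real
  assumes "0 < x" "x < 1"
  shows "summable (\<lambda>i. pochhammer r (i + k) / fact (i + k) * x ^ i)"
proof -
  have "summable (\<lambda>i. pochhammer r (i + k) / fact (i + k) * x ^ (i + k) * inverse x ^ k)"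
    using summable_ignore_initial_segment[OF summable_pochhammer_power[of x r], of k] assms
    by (intro summable_mult2) simp
  then show ?thesis
    using assms by (simp add: power_add power_inverse field_simps)
qed

lemma sums_gchoose_powr_diff:
  fixes x :: real and z :: complex
  assumes "1 < x"
  shows "(\<lambda>j. (-1) ^ Suc j * (z gchoose Suc j) * of_real x powr (z - of_nat (Suc j)))
           sums (of_real (x - 1) powr z - of_real x powr z)"
proof -
  define f where "f j = (z gchoose j) * of_real x powr (z - of_nat j) * of_real (-1) ^ j" for j
  have "f sums of_real (x - 1) powr z"
    unfolding f_def using assms gen_binomial_complex''[of "-1" x z] by simp
  then have "(\<lambda>j. f (Suc j)) sums (of_real (x - 1) powr z - f 0)"
    by (subst sums_Suc_iff) simp
  then show ?thesis
    by (simp add: f_def mult_ac)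
qed

lemma sum_atMost_split_ends:
  fixes n :: nat
  assumes "1 \<le> n"
  shows "(\<Sum>i\<le>n. f i) = f 0 + (\<Sum>i=1..n-1. f i) + (f n :: 'a :: comm_monoid_add)"
proof -
  obtain m where n: "n = Suc m"
    using assms by (cases n) auto
  show ?thesis
    by (simp add: n atLeast0AtMost[symmetric] sum.atLeast_Suc_atMost add_ac)
qed

lemma sum_atMost_split_last_two:
  fixes n :: nat
  assumes "1 \<le> n"
  shows "(\<Sum>i\<le>n. f i) = (\<Sum>i=1..n-1. f (i - 1)) + f (n - 1) + (f n :: 'a :: comm_monoid_add)"
proof -
  obtain m where n: "n = Suc m"
    using assms by (cases n) auto
  show ?thesis
    by (simp add: n sum.atLeast1_atMost_eq lessThan_Suc_atMost[symmetric])
qed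

definition rec_coeff :: "nat \<Rightarrow> complex \<Rightarrow> complex" where
  "rec_coeff j s = (-1) ^ j * ((1 - s) gchoose j) / of_nat (Suc j)"

lemma rec_coeff_0 [simp]: "rec_coeff 0 s = 1"
  by (simp add: rec_coeff_def)

lemma rec_coeff_mult: "rec_coeff j s * (s + of_nat j - 1) = (-1) ^ Suc j * ((1 - s) gchoose Suc j)"
proof -
  define C D where "C = (1 - s) gchoose j" and "D = (1 - s) gchoose Suc j"
  have "of_nat (Suc j) * D = (1 - s - of_nat j) * C"
    unfolding C_def D_def by (simp only: gbinomial_absorption gbinomial_absorb_comp)
  then have D_eq: "D = (1 - s - of_nat j) * C / of_nat (Suc j)"
    by (simp add: eq_divide_eq mult.commute del: of_nat_Suc)
  show ?thesis
    unfolding rec_coeff_def C_def[symmetric] D_def[symmetric] D_eq by (simp add: field_simps del: of_nat_Suc)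
qed

lemma rec_coeff_nonpos_int:
  "rec_coeff j (1 - of_nat N) = (-1) ^ j * of_nat (N choose j) / of_nat (Suc j)"
  by (simp add: rec_coeff_def binomial_gbinomial)

lemma holomorphic_rec_coeff: "(\<lambda>s. rec_coeff j s) holomorphic_on A"
  unfolding rec_coeff_def gbinomial_prod_rev by (intro holomorphic_intros) auto

lemma sums_rec_coeff_iff:
  "(\<lambda>j. rec_coeff j s * g (s + of_nat j)) sums c \<longleftrightarrow>
   (\<lambda>j. rec_coeff (Suc j) s * g (s + of_nat (Suc j))) sums (c - g s)"
  by (subst sums_Suc_iff) simp

locale hurwitz_offset =
  fixes a :: real
  assumes offset_pos: "0 < a"
begin

definition tail_base :: "nat \<Rightarrow> real" where
  "tail_base m = real m + a + 1"

lemma tail_base_ge: "a + 1 \<le> tail_base m"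
  by (simp add: tail_base_def)

lemma tail_base_pos: "0 < tail_base m"
  using offset_pos by (simp add: tail_base_def)

definition zeta_tail_real :: "real \<Rightarrow> real" where
  "zeta_tail_real \<sigma> = (\<Sum>m. tail_base m powr (-\<sigma>))"

definition zeta_tail :: "complex \<Rightarrow> complex" where
  "zeta_tail s = (\<Sum>m. of_real (tail_base m) powr (-s))"

lemma norm_zeta_tail_term: "norm (of_real (tail_base m) powr s) = tail_base m powr Re s"
  using tail_base_pos[of m] by (subst norm_powr_real_powr) auto

lemma summable_zeta_tail_real:
  assumes "1 < \<sigma>"
  shows "summable (\<lambda>m. tail_base m powr (-\<sigma>))"
proof (rule summable_comparison_test')
  show "summable (\<lambda>m. real (Suc m) powr (-\<sigma>))"
    using assms summable_ignore_initial_segment[of "\<lambda>n. real n powr (-\<sigma>)" 1]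
    by (simp add: summable_real_powr_iff)
  show "norm (tail_base m powr (-\<sigma>)) \<le> real (Suc m) powr (-\<sigma>)" for m
    using assms offset_pos by (auto intro!: powr_mono2' simp: tail_base_def)
qed

lemma zeta_tail_real_nonneg: "1 < \<sigma> \<Longrightarrow> 0 \<le> zeta_tail_real \<sigma>"
  unfolding zeta_tail_real_def by (intro suminf_nonneg summable_zeta_tail_real) auto

lemma zeta_tail_real_decay:
  assumes "1 < \<tau>" "\<tau> \<le> \<sigma>"
  shows "zeta_tail_real \<sigma> \<le> (a + 1) powr (\<tau> - \<sigma>) * zeta_tail_real \<tau>"
proof -
  have "tail_base m powr (-\<sigma>) \<le> (a + 1) powr (\<tau> - \<sigma>) * tail_base m powr (-\<tau>)" for m
  proof -
    have "tail_base m powr (-\<sigma>) = tail_base m powr (\<tau> - \<sigma>) * tail_base m powr (-\<tau>)"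
      by (simp flip: powr_add)
    also have "\<dots> \<le> (a + 1) powr (\<tau> - \<sigma>) * tail_base m powr (-\<tau>)"
      using assms tail_base_ge[of m] offset_pos by (intro mult_right_mono powr_mono2') auto
    finally show ?thesis .
  qed
  then have "zeta_tail_real \<sigma> \<le> (\<Sum>m. (a + 1) powr (\<tau> - \<sigma>) * tail_base m powr (-\<tau>))"
    unfolding zeta_tail_real_def using assms
    by (intro suminf_le summable_mult summable_zeta_tail_real) auto
  also have "\<dots> = (a + 1) powr (\<tau> - \<sigma>) * zeta_tail_real \<tau>"
    unfolding zeta_tail_real_def using assms by (intro suminf_mult summable_zeta_tail_real) auto
  finally show ?thesis .
qed

lemma summable_norm_zeta_tail:
  "1 < Re s \<Longrightarrow> summable (\<lambda>m. norm (of_real (tail_base m) powr (-s)))"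
  using summable_zeta_tail_real[of "Re s"] by (simp only: norm_zeta_tail_term uminus_complex.sel)

lemma zeta_tail_sums: "1 < Re s \<Longrightarrow> (\<lambda>m. of_real (tail_base m) powr (-s)) sums zeta_tail s"
  unfolding zeta_tail_def by (rule summable_sums[OF summable_norm_cancel[OF summable_norm_zeta_tail]])

lemma norm_zeta_tail_le: "1 < Re s \<Longrightarrow> norm (zeta_tail s) \<le> zeta_tail_real (Re s)"
  unfolding zeta_tail_def zeta_tail_real_def
  using summable_norm[OF summable_norm_zeta_tail] by (simp add: norm_zeta_tail_term)

lemma holomorphic_zeta_tail: "zeta_tail holomorphic_on {s. 1 < Re s}"
  unfolding zeta_tail_def[abs_def]
proof (rule holomorphic_on_suminf)
  show "open {s. 1 < Re s}"
    by (rule open_halfspace_Re_gt)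
  show "(\<lambda>s. of_real (tail_base m) powr (-s)) holomorphic_on {s. 1 < Re s}" for m
    by (intro holomorphic_intros)
  fix x assume "x \<in> {s. 1 < Re s}"
  then obtain d where "0 < d" and bound: "\<And>y. y \<in> cball x d \<Longrightarrow> 1 + d \<le> Re y"
    using halfplane_cball_margin[of 1 x] by auto
  have "cball x d \<subseteq> {s. 1 < Re s}"
    using bound \<open>0 < d\<close> by fastforce
  moreover have "summable (\<lambda>m. tail_base m powr (-(1 + d)))"
    using \<open>0 < d\<close> by (intro summable_zeta_tail_real) simp
  moreover have "norm (of_real (tail_base m) powr (-y)) \<le> tail_base m powr (-(1 + d))"
    if "y \<in> cball x d" for m y
    using bound[OF that] offset_pos tail_base_ge[of m] by (simp add: norm_zeta_tail_term powr_mono)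
  ultimately show "\<exists>d>0. cball x d \<subseteq> {s. 1 < Re s} \<and> (\<exists>M. summable M \<and>
          (\<forall>m. \<forall>y\<in>cball x d. norm (of_real (tail_base m) powr (-y)) \<le> M m))"
    using \<open>0 < d\<close> by blast
qed

lemma norm_gchoose_zeta_tail_real_le:
  fixes z :: complex
  assumes "norm z \<le> r" "1 < \<tau>" "\<tau> + real i \<le> \<sigma>"
  shows "norm (z gchoose k) * zeta_tail_real \<sigma> \<le>
         pochhammer r k / fact k * inverse (a + 1) ^ i * zeta_tail_real \<tau>"
proof -
  have binom: "norm (z gchoose k) \<le> pochhammer r k / fact k"
    using norm_gchoose_le[of z k] pochhammer_mono[OF norm_ge_zero assms(1), of k]
    by (meson divide_right_mono fact_ge_zero order_trans)
  have "zeta_tail_real \<sigma> \<le> (a + 1) powr (\<tau> - \<sigma>) * zeta_tail_real \<tau>"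
    using assms by (intro zeta_tail_real_decay) auto
  also have "\<dots> \<le> (a + 1) powr (- real i) * zeta_tail_real \<tau>"
    using assms offset_pos zeta_tail_real_nonneg[of \<tau>] by (intro mult_right_mono powr_mono) auto
  also have "(a + 1) powr (- real i) = inverse (a + 1) ^ i"
    using offset_pos by (simp add: powr_minus powr_realpow power_inverse)
  finally have "zeta_tail_real \<sigma> \<le> inverse (a + 1) ^ i * zeta_tail_real \<tau>" .
  with binom show ?thesis
    using order_trans[OF norm_ge_zero binom] zeta_tail_real_nonneg[of \<sigma>] assms
    unfolding mult.assoc by (intro mult_mono) auto
qed

definition regular_tail :: "complex \<Rightarrow> complex" where
  "regular_tail s = (s - 1) * zeta_tail s"

lemma holomorphic_regular_tail: "regular_tail holomorphic_on {s. 1 < Re s}"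
  unfolding regular_tail_def[abs_def] by (intro holomorphic_intros holomorphic_zeta_tail)

lemma rec_coeff_regular_tail:
  "rec_coeff j s * regular_tail (s + of_nat j) =
   (-1) ^ Suc j * ((1 - s) gchoose Suc j) * zeta_tail (s + of_nat j)"
  by (simp add: regular_tail_def rec_coeff_mult flip: mult.assoc)

lemma sums_powr_telescope:
  assumes "1 < Re s"
  shows "(\<lambda>m. of_real (tail_base m - 1) powr (1 - s) - of_real (tail_base m) powr (1 - s))
           sums of_real a powr (1 - s)"
proof -
  define F where "F m = of_real (real m + a) powr (1 - s)" for m
  have "filterlim (\<lambda>m. a + real m) at_top sequentially"
    by (rule filterlim_tendsto_add_at_top[OF tendsto_const filterlim_real_sequentially])
  then have "F \<longlonglongrightarrow> 0"
    unfolding F_def using assms by (intro tendsto_neg_powr_complex_of_real) (simp_all add: add.commute)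
  from telescope_sums'[OF this] show ?thesis
    by (simp add: F_def tail_base_def add_ac)
qed

lemma summable_gchoose_zeta_tail_real:
  assumes "1 < Re s"
  shows "summable (\<lambda>j. norm ((1 - s) gchoose Suc j) * zeta_tail_real (Re s + real j))"
proof (rule summable_comparison_test')
  show "summable (\<lambda>j. pochhammer (norm (1 - s)) (j + 1) / fact (j + 1) * inverse (a + 1) ^ j *
                       zeta_tail_real (Re s))"
    using offset_pos by (intro summable_mult2 summable_pochhammer_power_shift) (auto simp: inverse_less_1_iff)
  show "norm (norm ((1 - s) gchoose Suc j) * zeta_tail_real (Re s + real j)) \<le>
        pochhammer (norm (1 - s)) (j + 1) / fact (j + 1) * inverse (a + 1) ^ j * zeta_tail_real (Re s)" for j
    using norm_gchoose_zeta_tail_real_le[of "1 - s" "norm (1 - s)" "Re s" j "Re s + real j" "Suc j"]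
      zeta_tail_real_nonneg[of "Re s + real j"] assms
    by simp
qed

lemma regular_tail_recurrence:
  assumes "1 < Re s"
  shows "(\<lambda>j. rec_coeff j s * regular_tail (s + of_nat j)) sums of_real a powr (1 - s)"
proof -
  define f where
    "f j m = (-1) ^ Suc j * ((1 - s) gchoose Suc j) * of_real (tail_base m) powr (-(s + of_nat j))" for j m
  have norm_f: "norm (f j m) = norm ((1 - s) gchoose Suc j) * tail_base m powr (-(Re s + real j))" for j m
    by (simp add: f_def norm_mult norm_power norm_zeta_tail_term)
  have rows: "summable (\<lambda>m. norm (f j m))" for j
    unfolding norm_f using assms by (intro summable_mult summable_zeta_tail_real) auto
  have "(\<Sum>m. norm (f j m)) = norm ((1 - s) gchoose Suc j) * zeta_tail_real (Re s + real j)" for j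
    unfolding norm_f zeta_tail_real_def using assms by (intro suminf_mult summable_zeta_tail_real) auto
  then have total: "summable (\<lambda>j. \<Sum>m. norm (f j m))"
    using summable_gchoose_zeta_tail_real[OF assms] by simp
  have row_sums: "(\<Sum>m. f j m) = rec_coeff j s * regular_tail (s + of_nat j)" for j
    unfolding rec_coeff_regular_tail f_def zeta_tail_def using assms
    by (intro suminf_mult summable_norm_cancel[OF summable_norm_zeta_tail]) simp
  have cols: "(\<lambda>j. f j m) sums
                (of_real (tail_base m - 1) powr (1 - s) - of_real (tail_base m) powr (1 - s))" for m
  proof -
    have "1 - s - of_nat (Suc j) = -(s + of_nat j)" for j
      by simp
    then show ?thesis
      using sums_gchoose_powr_diff[of "tail_base m" "1 - s"] tail_base_ge[of m] offset_pos
      by (simp add: f_def)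
  qed
  have "(\<lambda>j. \<Sum>m. f j m) sums (\<Sum>m. \<Sum>j. f j m)"
    by (rule sums_suminf_swap[OF rows total])
  also have "(\<Sum>m. \<Sum>j. f j m) = of_real a powr (1 - s)"
    using sums_powr_telescope[OF assms] cols by (simp add: sums_iff)
  finally show ?thesis
    by (simp add: row_sums)
qed

lemma norm_rec_coeff_regular_tail_le:
  assumes "1 < Re (s + of_nat k)"
  shows "norm (rec_coeff k s * regular_tail (s + of_nat k)) \<le>
         norm ((1 - s) gchoose Suc k) * zeta_tail_real (Re s + real k)"
  unfolding rec_coeff_regular_tail norm_mult norm_power norm_minus_cancel norm_one power_one mult_1
  using norm_zeta_tail_le[OF assms] by (simp add: mult_left_mono)

lemma recurrence_tail_local_bound:
  assumes "1 - real J < Re x"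
  shows "\<exists>d>0. cball x d \<subseteq> {s. 1 - real J < Re s} \<and> (\<exists>M. summable M \<and>
           (\<forall>i. \<forall>y\<in>cball x d. norm (rec_coeff (i + J) y * regular_tail (y + of_nat (i + J))) \<le> M i))"
proof -
  obtain d where "0 < d" and Re_y: "\<And>y. y \<in> cball x d \<Longrightarrow> 1 - real J + d \<le> Re y"
    using halfplane_cball_margin[OF assms] by blast
  define r where "r = norm x + d + 1"
  define M where
    "M i = pochhammer r (Suc (i + J)) / fact (Suc (i + J)) * inverse (a + 1) ^ i * zeta_tail_real (1 + d)" for i
  have "cball x d \<subseteq> {s. 1 - real J < Re s}"
    using Re_y \<open>0 < d\<close> by fastforce
  moreover have "summable M"
    unfolding M_def using offset_pos summable_pochhammer_power_shift[of "inverse (a + 1)" r "Suc J"]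
    by (intro summable_mult2) (simp add: inverse_less_1_iff)
  moreover have "norm (rec_coeff (i + J) y * regular_tail (y + of_nat (i + J))) \<le> M i"
    if "y \<in> cball x d" for i y
  proof -
    have "norm (rec_coeff (i + J) y * regular_tail (y + of_nat (i + J))) \<le>
          norm ((1 - y) gchoose Suc (i + J)) * zeta_tail_real (Re y + real (i + J))"
      using Re_y[OF that] \<open>0 < d\<close> by (intro norm_rec_coeff_regular_tail_le) simp
    also have "\<dots> \<le> M i"
      unfolding M_def using Re_y[OF that] \<open>0 < d\<close> cball_norm_upper[OF that] norm_triangle_ineq4[of 1 y]
      by (intro norm_gchoose_zeta_tail_real_le) (auto simp: r_def)
    finally show ?thesis .
  qed
  ultimately show ?thesis
    using \<open>0 < d\<close> by blast
qed

definition recurrence_tail :: "nat \<Rightarrow> complex \<Rightarrow> complex" where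
  "recurrence_tail J s = (\<Sum>i. rec_coeff (i + J) s * regular_tail (s + of_nat (i + J)))"

lemma summable_recurrence_tail:
  assumes "1 - real J < Re s"
  shows "summable (\<lambda>i. rec_coeff (i + J) s * regular_tail (s + of_nat (i + J)))"
proof -
  obtain d M where "0 < d" "summable M"
    and bound: "\<forall>i. \<forall>y\<in>cball s d. norm (rec_coeff (i + J) y * regular_tail (y + of_nat (i + J))) \<le> M i"
    using recurrence_tail_local_bound[OF assms] by meson
  have "norm (rec_coeff (i + J) s * regular_tail (s + of_nat (i + J))) \<le> M i" for i
    using bound \<open>0 < d\<close> by simp
  with \<open>summable M\<close> show ?thesis
    by (rule summable_comparison_test')
qed

lemma holomorphic_recurrence_tail: "recurrence_tail J holomorphic_on {s. 1 - real J < Re s}"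
  unfolding recurrence_tail_def[abs_def]
proof (rule holomorphic_on_suminf)
  show "open {s. 1 - real J < Re s}"
    by (rule open_halfspace_Re_gt)
  have "(\<lambda>s. regular_tail (s + of_nat (i + J))) holomorphic_on {s. 1 - real J < Re s}" for i
    by (rule holomorphic_on_compose_gen[OF _ holomorphic_regular_tail, unfolded o_def])
       (auto intro: holomorphic_intros)
  then show "(\<lambda>s. rec_coeff (i + J) s * regular_tail (s + of_nat (i + J)))
               holomorphic_on {s. 1 - real J < Re s}" for i
    by (intro holomorphic_intros holomorphic_rec_coeff)
qed (use recurrence_tail_local_bound in simp)

text \<open>\<open>regular_stage N\<close> continues \<open>regular_tail\<close> to \<open>Re s > 1 - N\<close>: the recurrence,
  solved for its \<open>j = 0\<close> term, expresses the value at \<open>s\<close> through the values at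
  \<open>s + 1, s + 2, \<dots>\<close>, which the previous stage already covers.\<close>

fun regular_stage :: "nat \<Rightarrow> complex \<Rightarrow> complex" where
  "regular_stage 0 s = regular_tail s"
| "regular_stage (Suc N) s =
     of_real a powr (1 - s) - (\<Sum>j. rec_coeff (Suc j) s * regular_stage N (s + of_nat (Suc j)))"

lemma regular_stage_SucI:
  assumes "(\<lambda>j. rec_coeff j s * regular_stage N (s + of_nat j)) sums of_real a powr (1 - s)"
  shows "regular_stage (Suc N) s = regular_stage N s"
  using assms by (simp add: sums_rec_coeff_iff sums_iff)

lemma regular_stage_eq_regular_tail: "1 < Re s \<Longrightarrow> regular_stage N s = regular_tail s"
proof (induction N arbitrary: s)
  case (Suc N)
  have "regular_stage N (s + of_nat (Suc j)) = regular_tail (s + of_nat (Suc j))" for j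
    using Suc by simp
  moreover have "(\<lambda>j. rec_coeff (Suc j) s * regular_tail (s + of_nat (Suc j))) sums
                 (of_real a powr (1 - s) - regular_tail s)"
    using regular_tail_recurrence[OF Suc.prems] by (simp add: sums_rec_coeff_iff)
  ultimately show ?case
    by (simp add: sums_iff)
qed simp

lemma regular_stage_series_split:
  assumes "1 - real (Suc N) < Re s"
  shows "(\<lambda>j. rec_coeff (Suc j) s * regular_stage N (s + of_nat (Suc j))) sums
           ((\<Sum>j<N. rec_coeff (Suc j) s * regular_stage N (s + of_nat (Suc j))) +
            recurrence_tail (Suc N) s)"
proof -
  have tail: "regular_stage N (s + of_nat (Suc (i + N))) = regular_tail (s + of_nat (Suc (i + N)))" for i
    using assms by (intro regular_stage_eq_regular_tail) simp
  have "(\<lambda>i. rec_coeff (i + Suc N) s * regular_tail (s + of_nat (i + Suc N)))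
          sums recurrence_tail (Suc N) s"
    unfolding recurrence_tail_def by (rule summable_sums[OF summable_recurrence_tail[OF assms]])
  then have "(\<lambda>i. rec_coeff (Suc (i + N)) s * regular_stage N (s + of_nat (Suc (i + N))))
               sums recurrence_tail (Suc N) s"
    unfolding tail by (simp only: add_Suc_right)
  from sums_iff_shift[THEN iffD1, OF this] show ?thesis
    by (simp add: add.commute)
qed

lemma holomorphic_regular_stage: "regular_stage N holomorphic_on {s. 1 - real N < Re s}"
proof (induction N)
  case 0
  then show ?case
    using holomorphic_regular_tail by simp
next
  case (Suc N)
  have "(\<lambda>s. regular_stage N (s + of_nat (Suc j))) holomorphic_on {s. 1 - real (Suc N) < Re s}" for j
    by (rule holomorphic_on_compose_gen[OF _ Suc.IH, unfolded o_def]) (auto intro: holomorphic_intros)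
  then have "(\<lambda>s. of_real a powr (1 - s) -
                 ((\<Sum>j<N. rec_coeff (Suc j) s * regular_stage N (s + of_nat (Suc j))) +
                  recurrence_tail (Suc N) s)) holomorphic_on {s. 1 - real (Suc N) < Re s}"
    using holomorphic_recurrence_tail[of "Suc N"]
    by (intro holomorphic_intros holomorphic_rec_coeff) auto
  then show ?case
  proof (rule holomorphic_transform)
    fix s assume "s \<in> {s. 1 - real (Suc N) < Re s}"
    with regular_stage_series_split[of N s] show "of_real a powr (1 - s) -
        ((\<Sum>j<N. rec_coeff (Suc j) s * regular_stage N (s + of_nat (Suc j))) + recurrence_tail (Suc N) s) =
        regular_stage (Suc N) s"
      by (simp add: sums_iff)
  qed
qed

lemma regular_stage_recurrence:
  "1 - real N < Re s \<Longrightarrow>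
   (\<lambda>j. rec_coeff j s * regular_stage N (s + of_nat j)) sums of_real a powr (1 - s)"
proof (induction N arbitrary: s)
  case 0
  then show ?case
    using regular_tail_recurrence by simp
next
  case (Suc N)
  have shift: "regular_stage (Suc N) (s + of_nat (Suc j)) = regular_stage N (s + of_nat (Suc j))" for j
    using Suc by (intro regular_stage_SucI Suc.IH) simp
  have "(\<lambda>j. rec_coeff (Suc j) s * regular_stage N (s + of_nat (Suc j))) sums
          (of_real a powr (1 - s) - regular_stage (Suc N) s)"
    using regular_stage_series_split[OF Suc.prems] by (simp add: sums_iff)
  then show ?case
    unfolding sums_rec_coeff_iff shift .
qed

lemma regular_stage_add:
  assumes "1 - real N < Re s"
  shows "regular_stage (N + k) s = regular_stage N s"
proof (induction k)
  case (Suc k)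
  have "1 - real (N + k) < Re s"
    using assms by simp
  then have "regular_stage (Suc (N + k)) s = regular_stage (N + k) s"
    by (intro regular_stage_SucI regular_stage_recurrence)
  with Suc show ?case
    by simp
qed simp

definition hurwitz_regular :: "complex \<Rightarrow> complex" where
  "hurwitz_regular s = regular_stage (nat \<lceil>1 - Re s\<rceil> + 1) s"

lemma hurwitz_regular_eq_stage:
  assumes "1 - real N < Re s"
  shows "hurwitz_regular s = regular_stage N s"
proof -
  define K where "K = nat \<lceil>1 - Re s\<rceil> + 1"
  have "1 - real K < Re s"
    unfolding K_def by linarith
  then have "regular_stage (K + N) s = regular_stage K s"
    by (rule regular_stage_add)
  moreover have "regular_stage (N + K) s = regular_stage N s"
    using assms by (rule regular_stage_add)
  ultimately show ?thesis
    by (simp add: hurwitz_regular_def K_def add.commute)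
qed

lemma holomorphic_hurwitz_regular: "hurwitz_regular holomorphic_on UNIV"
proof -
  have "hurwitz_regular field_differentiable at x" for x
  proof -
    obtain N where N: "1 - Re x < real N"
      using reals_Archimedean2 by blast
    have "hurwitz_regular holomorphic_on {s. 1 - real N < Re s}"
      by (rule holomorphic_transform[OF holomorphic_regular_stage]) (simp add: hurwitz_regular_eq_stage)
    then show ?thesis
      using N open_halfspace_Re_gt holomorphic_on_imp_differentiable_at by force
  qed
  then show ?thesis
    unfolding holomorphic_on_def by (blast intro: field_differentiable_at_within)
qed

lemma hurwitz_regular_recurrence:
  "(\<lambda>j. rec_coeff j s * hurwitz_regular (s + of_nat j)) sums of_real a powr (1 - s)"
proof -
  obtain N where N: "1 - Re s < real N"
    using reals_Archimedean2 by blast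
  then have "hurwitz_regular (s + of_nat j) = regular_stage N (s + of_nat j)" for j
    by (intro hurwitz_regular_eq_stage) simp
  with regular_stage_recurrence[of N s] N show ?thesis
    by simp
qed

lemma hurwitz_regular_eq_regular_tail: "1 < Re s \<Longrightarrow> hurwitz_regular s = regular_tail s"
  using hurwitz_regular_eq_stage[of 0 s] by simp

definition hurwitz_zeta :: "complex \<Rightarrow> complex" where
  "hurwitz_zeta s = of_real a powr (-s) + hurwitz_regular s / (s - 1)"

lemma holomorphic_hurwitz_zeta: "hurwitz_zeta holomorphic_on - {1}"
  unfolding hurwitz_zeta_def[abs_def]
  by (intro holomorphic_intros holomorphic_on_subset[OF holomorphic_hurwitz_regular]) auto

lemma hurwitz_zeta_sums:
  assumes "1 < Re s"
  shows "(\<lambda>m. of_real (real m + a) powr (-s)) sums hurwitz_zeta s"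
proof -
  have "(\<lambda>m. of_real (real (Suc m) + a) powr (-s)) sums zeta_tail s"
    using zeta_tail_sums[OF assms] by (simp add: tail_base_def add_ac)
  from sums_Suc_iff[THEN iffD1, OF this]
  have "(\<lambda>m. of_real (real m + a) powr (-s)) sums (zeta_tail s + of_real a powr (-s))"
    by simp
  moreover have "s \<noteq> 1"
    using assms by auto
  then have "hurwitz_zeta s = zeta_tail s + of_real a powr (-s)"
    using assms by (simp add: hurwitz_zeta_def hurwitz_regular_eq_regular_tail regular_tail_def)
  ultimately show ?thesis
    by simp
qed

lemma hurwitz_regular_nonpos_int_recurrence:
  "(\<Sum>j\<le>N. (-1) ^ j * of_nat (N choose j) / of_nat (Suc j) * hurwitz_regular (of_nat (Suc j) - of_nat N))
     = of_real a ^ N"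
proof -
  define t where
    "t j = (-1) ^ j * of_nat (N choose j) / of_nat (Suc j) * hurwitz_regular (of_nat (Suc j) - of_nat N)" for j
  have "t sums of_real a ^ N"
    unfolding t_def using hurwitz_regular_recurrence[of "1 - of_nat N"] offset_pos
    by (simp add: rec_coeff_nonpos_int powr_nat' algebra_simps)
  moreover have "t sums (\<Sum>j\<le>N. t j)"
    by (rule sums_finite) (auto simp: t_def)
  ultimately show ?thesis
    unfolding t_def[symmetric] using sums_unique2 by blast
qed

lemma hurwitz_regular_1: "hurwitz_regular 1 = 1"
  using hurwitz_regular_nonpos_int_recurrence[of 0] by simp

lemma hurwitz_regular_0: "hurwitz_regular 0 = of_real a + 1 / 2"
  using hurwitz_regular_nonpos_int_recurrence[of 1] hurwitz_regular_1
  by (simp add: atMost_Suc field_simps)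

lemma hurwitz_zeta_neg_nat:
  "hurwitz_zeta (- of_nat k) = of_real a ^ k - hurwitz_regular (- of_nat k) / of_nat (Suc k)"
proof -
  have "- of_nat k - 1 = - (of_nat (Suc k) :: complex)"
    by simp
  then show ?thesis
    using offset_pos by (simp add: hurwitz_zeta_def powr_nat' del: of_nat_Suc)
qed

lemma binomial_hurwitz_zeta_nonpos_int:
  assumes "Suc k < n"
  shows "(-1) ^ Suc k * of_nat (n choose Suc k) * hurwitz_zeta (of_nat (Suc k) - of_nat n) =
         (-1) ^ Suc k * of_nat (n choose Suc k) * of_real a ^ (n - Suc k) +
         (-1) ^ k * of_nat (n choose k) / of_nat (Suc k) * hurwitz_regular (of_nat (Suc k) - of_nat n)"
proof -
  define R where "R = hurwitz_regular (of_nat (Suc k) - of_nat n)"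
  have neg: "- of_nat (n - Suc k) = (of_nat (Suc k) - of_nat n :: complex)"
    using assms by (simp add: of_nat_diff)
  have suc: "Suc (n - Suc k) = n - k"
    using assms by simp
  have zeta: "hurwitz_zeta (of_nat (Suc k) - of_nat n) = of_real a ^ (n - Suc k) - R / of_nat (n - k)"
    using hurwitz_zeta_neg_nat[of "n - Suc k", unfolded neg suc] by (simp add: R_def)
  have "of_nat (Suc k) * of_nat (n choose Suc k) = (of_nat (n - k) * of_nat (n choose k) :: complex)"
    unfolding of_nat_mult[symmetric] using binomial_absorption[of k n] binomial_absorb_comp[of n k] by simp
  then have ratio: "of_nat (n choose Suc k) / of_nat (n - k) = (of_nat (n choose k) / of_nat (Suc k) :: complex)"
    using assms by (simp add: field_simps del: of_nat_Suc)
  have "(-1) ^ Suc k * of_nat (n choose Suc k) * (R / of_nat (n - k)) =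
        - ((-1) ^ k * (of_nat (n choose Suc k) / of_nat (n - k)) * R)"
    by simp
  then show ?thesis
    unfolding zeta right_diff_distrib ratio R_def[symmetric] by simp
qed

lemma hurwitz_zeta_alternating_binomial_sum:
  assumes "2 \<le> n"
  shows "(\<Sum>i=1..n-1. (-1) ^ i * of_nat (n choose i) * hurwitz_zeta (of_int (int i - int n))) =
         (of_real a - 1) ^ n + (-1) ^ n * (of_real a - 1 / 2) - (-1) ^ n / of_nat (Suc n)"
proof -
  define c :: "nat \<Rightarrow> complex" where "c j = (-1) ^ j * of_nat (n choose j) / of_nat (Suc j)" for j
  define g where "g j = hurwitz_regular (of_nat (Suc j) - of_nat n)" for j
  define p :: "nat \<Rightarrow> complex" where "p i = (-1) ^ i * of_nat (n choose i) * of_real a ^ (n - i)" for i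
  have summand:
    "(-1) ^ i * of_nat (n choose i) * hurwitz_zeta (of_int (int i - int n)) = p i + c (i - 1) * g (i - 1)"
    if range: "i \<in> {1..n-1}" for i
  proof -
    obtain k where "i = Suc k" and "Suc k < n"
      using range assms by (cases i) auto
    then show ?thesis
      using binomial_hurwitz_zeta_nonpos_int[of k n] by (simp add: p_def c_def g_def)
  qed
  have "(\<Sum>i\<le>n. p i) = (of_real a - 1) ^ n"
    using binomial_ring[of "-1" "of_real a :: complex" n] by (simp add: p_def mult_ac)
  then have p_sum: "(\<Sum>i=1..n-1. p i) = (of_real a - 1) ^ n - of_real a ^ n - (-1) ^ n"
    using sum_atMost_split_ends[of n p] assms by (simp add: p_def algebra_simps)
  have "(\<Sum>j\<le>n. c j * g j) = of_real a ^ n"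
    using hurwitz_regular_nonpos_int_recurrence[of n] by (simp add: c_def g_def)
  moreover have "(\<Sum>j\<le>n. c j * g j) =
      (\<Sum>i=1..n-1. c (i - 1) * g (i - 1)) + c (n - 1) * g (n - 1) + c n * g n"
    using assms by (intro sum_atMost_split_last_two) simp
  moreover have "n choose (n - 1) = n"
    using binomial_symmetric[of "n - 1" n] assms by simp
  then have "c (n - 1) = (-1) ^ (n - 1)" "c n = (-1) ^ n / of_nat (Suc n)"
    using assms by (simp_all add: c_def)
  moreover have "g (n - 1) = of_real a + 1 / 2" "g n = 1"
    using assms hurwitz_regular_0 hurwitz_regular_1 by (simp_all add: g_def)
  ultimately have cg_sum: "(\<Sum>i=1..n-1. c (i - 1) * g (i - 1)) =
      of_real a ^ n + (-1) ^ n * (of_real a + 1 / 2) - (-1) ^ n / of_nat (Suc n)"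
    using assms by (simp add: algebra_simps power_diff)
  have "(\<Sum>i=1..n-1. (-1) ^ i * of_nat (n choose i) * hurwitz_zeta (of_int (int i - int n))) =
        (\<Sum>i=1..n-1. p i + c (i - 1) * g (i - 1))"
    by (rule sum.cong[OF refl summand])
  also have "\<dots> = (\<Sum>i=1..n-1. p i) + (\<Sum>i=1..n-1. c (i - 1) * g (i - 1))"
    by (rule sum.distrib)
  finally show ?thesis
    unfolding p_sum cg_sum by (simp add: algebra_simps)
qed

end

lemma xi_eqI:
  assumes "xi_series_ext f" "z \<noteq> 1"
  shows "xi z = f z"
proof -
  have "g z = f z" if "xi_series_ext g" for g
  proof (rule analytic_continuation_open[of "{s. 1 < Re s}" "- {1}" g f])
    show "g holomorphic_on - {1}" "f holomorphic_on - {1}"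
      using that assms(1) by (simp_all add: xi_series_ext_def)
    show "connected (- {1 :: complex})"
      by (rule connected_punctured_universe) simp
    show "g s = f s" if "s \<in> {s. 1 < Re s}" for s
      using that \<open>xi_series_ext g\<close> assms(1) by (auto simp: xi_series_ext_def intro: sums_unique2)
  qed (use assms(2) open_halfspace_Re_gt in \<open>auto intro!: exI[of _ 2]\<close>)
  then show ?thesis
    unfolding xi_def using assms(1) by (intro the_equality) blast+
qed

lemma xi_eq_hurwitz_zeta:
  assumes "z \<noteq> 1"
  shows "xi z = hurwitz_offset.hurwitz_zeta (1 / 2) z"
proof -
  interpret hurwitz_offset "1 / 2"
    by unfold_locales simp
  show ?thesis
    using assms holomorphic_hurwitz_zeta hurwitz_zeta_sums by (intro xi_eqI) (simp_all add: xi_series_ext_def)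
qed

theorem lemma2p2:
  fixes n :: nat
  assumes "n \<ge> 2"
  shows "(\<Sum>i=1..n-1. (-1)^i * of_nat (n choose i) * xi (of_int (int i - int n)))
         = (-1)^(n+1) / of_nat (n+1) + (-1)^n / 2^n"
proof -
  interpret hurwitz_offset "1 / 2"
    by unfold_locales simp
  have "xi (of_int (int i - int n)) = hurwitz_zeta (of_int (int i - int n))" if "i \<in> {1..n-1}" for i
  proof (rule xi_eq_hurwitz_zeta)
    show "of_int (int i - int n) \<noteq> (1 :: complex)"
      using that by (simp only: of_int_eq_1_iff) auto
  qed
  then have "(\<Sum>i=1..n-1. (-1)^i * of_nat (n choose i) * xi (of_int (int i - int n))) =
             (\<Sum>i=1..n-1. (-1)^i * of_nat (n choose i) * hurwitz_zeta (of_int (int i - int n)))"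
    by (intro sum.cong) simp_all
  also have "\<dots> = (1 / 2 - 1) ^ n + (-1) ^ n * (1 / 2 - 1 / 2) - (-1) ^ n / of_nat (Suc n)"
    using hurwitz_zeta_alternating_binomial_sum[OF assms] by simp
  also have "\<dots> = (-1)^(n+1) / of_nat (n+1) + (-1)^n / 2^n"
    by (simp add: power_minus[of "1 / 2"] power_divide)
  finally show ?thesis .
qed

end
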